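(* Let $(X,d_X,\mu_X)$ be a compact metric measure space and let $\phi_i$ be an $L^2$-normalized eigenfunction of the distance kernel operator $D^X$ with eigenvalue $\lambda_i$. Then the function $\lambda_i\phi_i$ ($=D^X\phi_i$) is $\sqrt{\operatorname{Vol}(X)}$-Lipschitz. Hence, if $\lambda_i\neq0$, $\phi_i$ is $\big(\sqrt{\operatorname{Vol}(X)}/|\lambda_i|\big)$-Lipschitz.
   Context: A metric measure space carries a Radon Borel measure; $\operatorname{Vol}(X)=\mu_X(X)$. The distance kernel operator is $(D^Xf)(x)=\int_X f(y)d_X(x,y)\,d\mu_X(y)$ on $L^2(X,\mu_X)$. *)

theory Defs
  imports "HOL-Analysis.Analysis"
begin

definition distance_kernel_op :: "'a::metric_space measure \<Rightarrow> ('a \<Rightarrow> real) \<Rightarrow> 'a \<Rightarrow> real" where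
  "distance_kernel_op M f x = (\<integral>y. f y * dist x y \<partial>M)"

end

theory Submission
  imports Defs
begin

text \<open>Since \<open>|d(x,y) - d(x',y)| \<le> d(x,x')\<close>, writing \<open>D\<phi>(x) - D\<phi>(x')\<close> as a single
  integral shows that \<open>D\<phi>\<close> is \<open>\<parallel>\<phi>\<parallel>\<^sub>1\<close>-Lipschitz, and Cauchy-Schwarz against the constant 1
  gives \<open>\<parallel>\<phi>\<parallel>\<^sub>1 \<le> sqrt(Vol X) \<parallel>\<phi>\<parallel>\<^sub>2 = sqrt(Vol X)\<close>. As \<open>\<phi>\<close> is only determined almost
  everywhere, the second claim is about its representative \<open>D\<phi> / \<lambda>\<close>.\<close>

lemma (in finite_measure) Cauchy_Schwarz_integral_abs:
  fixes f :: "'a \<Rightarrow> real"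
  assumes [measurable]: "f \<in> borel_measurable M" and "integrable M (\<lambda>x. (f x)\<^sup>2)"
  shows "(\<integral>x. \<bar>f x\<bar> \<partial>M) \<le> sqrt (measure M (space M)) * sqrt (\<integral>x. (f x)\<^sup>2 \<partial>M)"
proof -
  have "integrable M (\<lambda>x. \<bar>f x\<bar>)"
    using square_integrable_imp_integrable[OF assms] by simp
  then have "ennreal ((\<integral>x. \<bar>f x\<bar> \<partial>M)\<^sup>2) = (\<integral>\<^sup>+x. ennreal \<bar>f x\<bar> * 1 \<partial>M)\<^sup>2"
    by (simp add: nn_integral_eq_integral ennreal_power)
  also have "\<dots> \<le> (\<integral>\<^sup>+x. ennreal \<bar>f x\<bar> ^ 2 \<partial>M) * (\<integral>\<^sup>+x. 1 ^ 2 \<partial>M)"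
    by (rule Cauchy_Schwarz_nn_integral) auto
  also have "\<dots> = ennreal ((\<integral>x. (f x)\<^sup>2 \<partial>M) * measure M (space M))"
    using assms(2)
    by (simp add: ennreal_power nn_integral_eq_integral emeasure_eq_measure ennreal_mult)
  finally have "(\<integral>x. \<bar>f x\<bar> \<partial>M)\<^sup>2 \<le> (\<integral>x. (f x)\<^sup>2 \<partial>M) * measure M (space M)"
    by (simp add: ennreal_le_iff)
  then show ?thesis
    by (metis mult.commute real_le_rsqrt real_sqrt_mult)
qed

lemma borel_measurable_dist_restrict_space:
  fixes M :: "'a::metric_space measure"
  assumes "sets M = sets (restrict_space borel (space M))"
  shows "(\<lambda>y. dist x y) \<in> borel_measurable M"
  unfolding measurable_cong_sets[OF assms refl]
  by (intro borel_measurable_continuous_on_restrict continuous_intros)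

lemma integrable_distance_kernel:
  fixes M :: "'a::metric_space measure"
  assumes "bounded (space M)" and "sets M = sets (restrict_space borel (space M))"
    and "integrable M f"
  shows "integrable M (\<lambda>y. f y * dist x y)"
proof -
  obtain B where B: "\<And>y. y \<in> space M \<Longrightarrow> dist x y \<le> B"
    using assms(1) by (meson bounded_any_center)
  show ?thesis
  proof (rule Bochner_Integration.integrable_bound)
    show "integrable M (\<lambda>y. f y * B)"
      using assms(3) by simp
    show "(\<lambda>y. f y * dist x y) \<in> borel_measurable M"
      using borel_measurable_integrable[OF assms(3)] borel_measurable_dist_restrict_space[OF assms(2)]
      by simp
    show "AE y in M. norm (f y * dist x y) \<le> norm (f y * B)"
    proof (rule AE_I2)
      fix y assume "y \<in> space M"
      then have "dist x y \<le> \<bar>B\<bar>"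
        using B by force
      then show "norm (f y * dist x y) \<le> norm (f y * B)"
        by (simp add: abs_mult mult_left_mono)
    qed
  qed
qed

lemma lipschitz_on_distance_kernel_op:
  fixes M :: "'a::metric_space measure"
  assumes "bounded (space M)" and "sets M = sets (restrict_space borel (space M))"
    and "integrable M f"
  shows "(\<integral>y. \<bar>f y\<bar> \<partial>M)-lipschitz_on (space M) (distance_kernel_op M f)"
proof (rule lipschitz_onI)
  fix x x'
  have "dist (distance_kernel_op M f x) (distance_kernel_op M f x')
      = \<bar>\<integral>y. f y * (dist x y - dist x' y) \<partial>M\<bar>"
    using integrable_distance_kernel[OF assms]
    by (simp add: distance_kernel_op_def dist_real_def right_diff_distrib)
  also have "\<dots> \<le> (\<integral>y. \<bar>f y * (dist x y - dist x' y)\<bar> \<partial>M)"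
    by (rule integral_abs_bound)
  also have "\<dots> \<le> (\<integral>y. \<bar>f y\<bar> * dist x x' \<partial>M)"
  proof (rule integral_mono)
    show "integrable M (\<lambda>y. \<bar>f y * (dist x y - dist x' y)\<bar>)"
      using integrable_distance_kernel[OF assms] by (simp add: right_diff_distrib)
    show "integrable M (\<lambda>y. \<bar>f y\<bar> * dist x x')"
      using assms(3) by simp
    show "\<bar>f y * (dist x y - dist x' y)\<bar> \<le> \<bar>f y\<bar> * dist x x'" for y
      unfolding abs_mult
      by (rule mult_left_mono) (metis abs_dist_diff_le dist_commute, simp)
  qed
  also have "\<dots> = (\<integral>y. \<bar>f y\<bar> \<partial>M) * dist x x'"
    by simp
  finally show "dist (distance_kernel_op M f x) (distance_kernel_op M f x')
      \<le> (\<integral>y. \<bar>f y\<bar> \<partial>M) * dist x x'" .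
qed simp

theorem lemma3p2:
  fixes X :: "'a::metric_space set" and M :: "'a measure"
    and \<phi> :: "'a \<Rightarrow> real" and lam :: real
  assumes "compact X"
    and "space M = X" and "sets M = sets (restrict_space borel X)"
    and "finite_measure M"
    and "\<phi> \<in> borel_measurable M"
    and "integrable M (\<lambda>x. (\<phi> x)\<^sup>2)"
    and "(\<integral>x. (\<phi> x)\<^sup>2 \<partial>M) = 1"
    and "AE x in M. distance_kernel_op M \<phi> x = lam * \<phi> x"
  shows "(sqrt (measure M X))-lipschitz_on X (distance_kernel_op M \<phi>)
    \<and> (lam \<noteq> 0 \<longrightarrow> (\<exists>\<psi>. (sqrt (measure M X) / \<bar>lam\<bar>)-lipschitz_on X \<psi>
                          \<and> (AE x in M. \<psi> x = \<phi> x)))"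
proof -
  interpret finite_measure M by fact
  have "(\<integral>y. \<bar>\<phi> y\<bar> \<partial>M)-lipschitz_on X (distance_kernel_op M \<phi>)"
    using lipschitz_on_distance_kernel_op[of M \<phi>] assms(1-3,5,6)
    by (simp add: compact_imp_bounded square_integrable_imp_integrable)
  moreover have "(\<integral>y. \<bar>\<phi> y\<bar> \<partial>M) \<le> sqrt (measure M X)"
    using Cauchy_Schwarz_integral_abs[OF assms(5,6)] assms(2,7) by simp
  ultimately have lip: "(sqrt (measure M X))-lipschitz_on X (distance_kernel_op M \<phi>)"
    by (rule lipschitz_on_mono[OF _ order_refl])
  have "(sqrt (measure M X) / \<bar>lam\<bar>)-lipschitz_on X (\<lambda>x. distance_kernel_op M \<phi> x / lam)
      \<and> (AE x in M. distance_kernel_op M \<phi> x / lam = \<phi> x)" if "lam \<noteq> 0"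
    using lipschitz_on_cmult_real[OF lip, of "1 / lam"] assms(8) that
    by (auto simp: divide_inverse mult.commute elim!: AE_mp)
  with lip show ?thesis
    by blast
qed

end
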